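(* Assume Hypotheses (H1) and (H2) hold for the Markov process $X$ on $\mathbb{R}^d$, and let $R>0$ (in the paper, $R=R_*$ from Lemma 3.2). Then there exists $T_0=T_0(R)>1$ such that for all $x,y\in\overline{B}_R$ and all $t>T_0$, $$\|P_t(x,\cdot)-P_t(y,\cdot)\|_{var}=\sup_{0\le f\le1}[P_tf(x)-P_tf(y)]<1.$$ Moreover, for each such $t>T_0$, $$p:=\sup_{|x|\le R,\,|y|\le R}\|P_t(x,\cdot)-P_t(y,\cdot)\|_{var}<1.$$
   Context: $X$ is an adapted càdlàg strong Markov process on $\mathbb{R}^d$ with semigroup $(P_t)$, transition kernel $P_t(x,\cdot)$ and dual action $P_t^*$ on probability measures. $\Gamma(\mu,\nu)$ is the set of probability measures on $\mathbb{R}^d\times\mathbb{R}^d$ with marginals $\mu,\nu$. $\|\mu\|_{var}=\sup_{\Gamma\in\mathcal{B}(\mathbb{R}^d)}|\mu(\Gamma)|$. $\overline{B}_R=\{|u|\le R\}$. The suprema over $f$ range over Borel functions. (H1): for any $R,\delta>0$ there exist $R_0=R_0(R)>0$ (independent of $\delta$) and $T_0=T_0(R,\delta)$ such that for all $t\ge T_0$ and $x,y\in\overline{B}_R$, $\sup_{\pi\in\Gamma(P_t^*\delta_x,P_t^*\delta_y)}\pi\{(x',y'):|x'-y'|\le\delta,\ x',y'\in\overline{B}_{R_0}\}>0$. (H2): for all $t>0$ and $x$, $\lim_{y\to x}\sup_{\|f\|_\infty\le1}[P_tf(x)-P_tf(y)]=0$. *)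

theory Defs
  imports "HOL-Probability.Probability"
begin

text \<open>A time-homogeneous Markov transition function on the state space 'a
  (R^d is taken as real^'n): P t x is the law of X_t under X_0 = x.\<close>
definition markov_transition :: "(real \<Rightarrow> 'a::euclidean_space \<Rightarrow> 'a measure) \<Rightarrow> bool" where
  "markov_transition P \<longleftrightarrow>
     (\<forall>t\<ge>0. \<forall>x. prob_space (P t x) \<and> sets (P t x) = sets borel) \<and>
     (\<forall>t\<ge>0. P t \<in> borel \<rightarrow>\<^sub>M subprob_algebra borel) \<and>
     (\<forall>x. P 0 x = return borel x) \<and>
     (\<forall>s\<ge>0. \<forall>t\<ge>0. \<forall>x. P (s + t) x = P s x \<bind> P t)"

definition Pf :: "(real \<Rightarrow> 'a \<Rightarrow> 'a measure) \<Rightarrow> real \<Rightarrow> ('a \<Rightarrow> real) \<Rightarrow> 'a \<Rightarrow> real" where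
  "Pf P t f x = integral\<^sup>L (P t x) f"

definition couplings :: "'a::euclidean_space measure \<Rightarrow> 'a measure \<Rightarrow> ('a \<times> 'a) measure set" where
  "couplings \<mu> \<nu> = {\<pi>. prob_space \<pi> \<and> sets \<pi> = sets (borel \<Otimes>\<^sub>M borel) \<and>
                        distr \<pi> borel fst = \<mu> \<and> distr \<pi> borel snd = \<nu>}"

definition var_norm :: "'a::euclidean_space measure \<Rightarrow> 'a measure \<Rightarrow> real" where
  "var_norm \<mu> \<nu> = (SUP A \<in> sets (borel :: 'a measure). \<bar>measure \<mu> A - measure \<nu> A\<bar>)"

definition H1 :: "(real \<Rightarrow> 'a::euclidean_space \<Rightarrow> 'a measure) \<Rightarrow> bool" where
  "H1 P \<longleftrightarrow> (\<forall>R>0. \<exists>R0>0. \<forall>\<delta>>0. \<exists>T0. \<forall>t\<ge>T0. \<forall>x y. norm x \<le> R \<longrightarrow> norm y \<le> R \<longrightarrow>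
     (SUP \<pi> \<in> couplings (P t x) (P t y).
        measure \<pi> {(x', y'). dist x' y' \<le> \<delta> \<and> norm x' \<le> R0 \<and> norm y' \<le> R0}) > 0)"

definition H2 :: "(real \<Rightarrow> 'a::euclidean_space \<Rightarrow> 'a measure) \<Rightarrow> bool" where
  "H2 P \<longleftrightarrow> (\<forall>t>0. \<forall>x.
     ((\<lambda>y. SUP f \<in> {f. f \<in> borel_measurable borel \<and> (\<forall>z. \<bar>f z\<bar> \<le> 1)}.
            Pf P t f x - Pf P t f y) \<longlongrightarrow> 0) (at x))"

end

theory Submission
  imports Defs
begin

text \<open>
  By (H2), \<open>(x, y) \<mapsto> \<parallel>P\<^sub>1(x,\<cdot>) - P\<^sub>1(y,\<cdot>)\<parallel>\<^sub>v\<^sub>a\<^sub>r\<close> is continuous, hence uniformly continuous on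
  \<open>B\<^sub>R\<^sub>0 \<times> B\<^sub>R\<^sub>0\<close>, so it is at most \<open>1/2\<close> on the set \<open>S\<close> of pairs in \<open>B\<^sub>R\<^sub>0 \<times> B\<^sub>R\<^sub>0\<close> at distance
  at most some \<open>\<delta>\<close>. By (H1), for large \<open>s\<close> the laws \<open>P\<^sub>s(x,\<cdot>)\<close>, \<open>P\<^sub>s(y,\<cdot>)\<close> admit a coupling \<open>\<pi>\<close>
  with \<open>\<pi>(S) > 0\<close>. Writing \<open>P\<^sub>s\<^sub>+\<^sub>1 f = P\<^sub>s (P\<^sub>1 f)\<close> and integrating \<open>P\<^sub>1 f(x') - P\<^sub>1 f(y')\<close> against
  \<open>\<pi>\<close> gives \<open>P\<^sub>s\<^sub>+\<^sub>1 f(x) - P\<^sub>s\<^sub>+\<^sub>1 f(y) \<le> 1 - \<pi>(S)/2\<close> for every \<open>0 \<le> f \<le> 1\<close>. The uniform bound over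
  the ball follows because the variation distance is continuous and the ball is compact.
\<close>

lemma abs_measure_diff_le_1:
  assumes "prob_space \<mu>" "prob_space \<nu>"
  shows "\<bar>measure \<mu> A - measure \<nu> A\<bar> \<le> 1"
  using prob_space.prob_le_1[OF assms(1), of A] prob_space.prob_le_1[OF assms(2), of A]
    measure_nonneg[of \<mu> A] measure_nonneg[of \<nu> A] by linarith

lemma abs_measure_diff_le_var_norm:
  assumes "prob_space \<mu>" "prob_space \<nu>" "A \<in> sets borel"
  shows "\<bar>measure \<mu> A - measure \<nu> A\<bar> \<le> var_norm \<mu> \<nu>"
  unfolding var_norm_def
  using abs_measure_diff_le_1[OF assms(1,2)] by (intro cSUP_upper[OF assms(3)] bdd_aboveI) auto

lemma var_norm_nonneg:
  assumes "prob_space \<mu>" "prob_space \<nu>"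
  shows "0 \<le> var_norm \<mu> \<nu>"
  using abs_measure_diff_le_var_norm[OF assms, of "{}"] by simp

lemma var_norm_self [simp]: "var_norm \<mu> \<mu> = 0"
  unfolding var_norm_def by simp (metis cSUP_const empty_iff sets.empty_sets)

lemma var_norm_commute: "var_norm \<mu> \<nu> = var_norm \<nu> \<mu>"
  unfolding var_norm_def by (simp add: abs_minus_commute)

lemma var_norm_triangle:
  assumes "prob_space \<mu>" "prob_space \<nu>" "prob_space \<rho>"
  shows "var_norm \<mu> \<rho> \<le> var_norm \<mu> \<nu> + var_norm \<nu> \<rho>"
  unfolding var_norm_def[of \<mu> \<rho>]
proof (rule cSUP_least)
  fix A :: "'a set" assume "A \<in> sets borel"
  then show "\<bar>measure \<mu> A - measure \<rho> A\<bar> \<le> var_norm \<mu> \<nu> + var_norm \<nu> \<rho>"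
    using abs_measure_diff_le_var_norm[OF assms(1,2)] abs_measure_diff_le_var_norm[OF assms(2,3)]
    by (smt (verit))
qed auto

subsection \<open>Total variation as a supremum over test functions\<close>

definition unit_borel_functions :: "('a::euclidean_space \<Rightarrow> real) set" where
  "unit_borel_functions = {f. f \<in> borel_measurable borel \<and> (\<forall>z. 0 \<le> f z \<and> f z \<le> 1)}"

lemma integrable_bounded_borel:
  fixes f :: "_ \<Rightarrow> real"
  assumes "prob_space M" "sets M = sets borel" "f \<in> borel_measurable borel" "\<And>z. \<bar>f z\<bar> \<le> B"
  shows "integrable M f"
proof -
  interpret prob_space M by fact
  have "f \<in> borel_measurable M"
    using assms(2,3) measurable_cong_sets[OF assms(2) refl] by simp
  then show ?thesis by (intro integrable_const_bound[where B=B]) (auto simp: assms(4))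
qed

lemma abs_integral_le_1:
  fixes f :: "'a::euclidean_space \<Rightarrow> real"
  assumes "prob_space M" "sets M = sets borel" "f \<in> borel_measurable borel" "\<And>z. \<bar>f z\<bar> \<le> 1"
  shows "\<bar>integral\<^sup>L M f\<bar> \<le> 1"
proof -
  interpret prob_space M by fact
  have "integral\<^sup>L M (\<lambda>_. -1) \<le> integral\<^sup>L M f" "integral\<^sup>L M f \<le> integral\<^sup>L M (\<lambda>_. 1)"
    using integrable_bounded_borel[OF assms] assms(4) by (intro integral_mono; auto simp: abs_le_iff)+
  then show ?thesis by (simp add: prob_space)
qed

lemma integral_indicator_borel:
  assumes "sets M = sets borel"
  shows "integral\<^sup>L M (indicator A :: _ \<Rightarrow> real) = measure M A"
  using sets_eq_imp_space_eq[OF assms] by simp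

lemma sum_if_le_atLeastAtMost_eq_floor:
  fixes a :: real
  assumes "0 \<le> a" "a \<le> real n"
  shows "(\<Sum>k\<in>{1..n}. if real k \<le> a then 1 else 0 :: real) = real (nat \<lfloor>a\<rfloor>)"
proof -
  have "(\<Sum>k\<in>{1..n}. if real k \<le> a then 1 else 0 :: real) = (\<Sum>k\<in>{k\<in>{1..n}. real k \<le> a}. 1)"
    by (rule sum.inter_filter[symmetric]) simp
  also have "{k\<in>{1..n}. real k \<le> a} = {1..nat \<lfloor>a\<rfloor>}"
    using assms by (auto simp: le_nat_iff le_floor_iff)
  finally show ?thesis
    by simp
qed

text \<open>
  The staircase \<open>\<lfloor>n f\<rfloor> / n\<close>, a sum of indicators of the level sets \<open>{k \<le> n f}\<close>, is within
  \<open>1/n\<close> below \<open>f\<close>, and on it the difference of the integrals is an average of differences of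
  measures.
\<close>
lemma integral_diff_le_var_norm_add_inverse:
  assumes p\<mu>: "prob_space \<mu>" and s\<mu>: "sets \<mu> = sets borel"
    and p\<nu>: "prob_space \<nu>" and s\<nu>: "sets \<nu> = sets borel"
    and f: "f \<in> unit_borel_functions" and n: "n > 0"
  shows "integral\<^sup>L \<mu> f - integral\<^sup>L \<nu> f \<le> var_norm \<mu> \<nu> + 1 / real n"
proof -
  have f_meas [measurable]: "f \<in> borel_measurable borel" and f01: "\<And>z. 0 \<le> f z \<and> f z \<le> 1"
    using f by (auto simp: unit_borel_functions_def)
  define A where "A k = {z. real k \<le> real n * f z}" for k :: nat
  have A [measurable]: "A k \<in> sets borel" for k
    unfolding A_def by measurable
  define g where "g z = (\<Sum>k\<in>{1..n}. indicator (A k) z) / real n" for z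
  have g_meas [measurable]: "g \<in> borel_measurable borel"
    unfolding g_def by measurable
  have g_floor: "g z = real (nat \<lfloor>real n * f z\<rfloor>) / real n" for z
  proof -
    have "(\<Sum>k\<in>{1..n}. indicator (A k) z) = (\<Sum>k\<in>{1..n}. if real k \<le> real n * f z then 1 else 0 :: real)"
      by (intro sum.cong) (auto simp: A_def indicator_def)
    also have "\<dots> = real (nat \<lfloor>real n * f z\<rfloor>)"
      using f01[of z] by (intro sum_if_le_atLeastAtMost_eq_floor) (auto intro: mult_left_le)
    finally show ?thesis
      by (simp add: g_def)
  qed
  have g_le_f: "g z \<le> f z" and f_le_g: "f z \<le> g z + 1 / real n" for z
  proof -
    have "real (nat \<lfloor>real n * f z\<rfloor>) = of_int \<lfloor>real n * f z\<rfloor>"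
      using f01[of z] by simp
    then have "real (nat \<lfloor>real n * f z\<rfloor>) \<le> real n * f z"
      "real n * f z < real (nat \<lfloor>real n * f z\<rfloor>) + 1"
      by linarith+
    then show "g z \<le> f z" "f z \<le> g z + 1 / real n"
      using n unfolding g_floor by (simp_all add: field_simps)
  qed
  have g_bound: "\<bar>g z\<bar> \<le> 1" and f_bound: "\<bar>f z\<bar> \<le> 1" for z
    using g_le_f[of z] f01[of z] g_floor[of z] by auto
  have integral_g: "integral\<^sup>L M g = (\<Sum>k\<in>{1..n}. measure M (A k)) / real n"
    if "prob_space M" "sets M = sets borel" for M
  proof -
    interpret prob_space M by fact
    have "integral\<^sup>L M g = integral\<^sup>L M (\<lambda>z. \<Sum>k\<in>{1..n}. indicator (A k) z) / real n"
      unfolding g_def by (rule integral_divide_zero)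
    also have "\<dots> = (\<Sum>k\<in>{1..n}. integral\<^sup>L M (indicator (A k))) / real n"
      using that(2) by (subst Bochner_Integration.integral_sum) (auto simp: less_top[symmetric])
    finally show ?thesis
      by (simp add: sets_eq_imp_space_eq[OF that(2)])
  qed
  have "integral\<^sup>L \<mu> g - integral\<^sup>L \<nu> g = (\<Sum>k\<in>{1..n}. measure \<mu> (A k) - measure \<nu> (A k)) / real n"
    by (simp add: integral_g[OF p\<mu> s\<mu>] integral_g[OF p\<nu> s\<nu>] sum_subtractf diff_divide_distrib)
  also have "\<dots> \<le> (\<Sum>k\<in>{1..n}. var_norm \<mu> \<nu>) / real n"
    using abs_measure_diff_le_var_norm[OF p\<mu> p\<nu> A]
    by (intro divide_right_mono sum_mono) (auto intro: order_trans[OF abs_ge_self])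
  also have "\<dots> = var_norm \<mu> \<nu>"
    using n by simp
  finally have g_diff: "integral\<^sup>L \<mu> g - integral\<^sup>L \<nu> g \<le> var_norm \<mu> \<nu>" .
  interpret \<mu>: prob_space \<mu> by fact
  have int_g: "integrable \<mu> g" and int_f: "integrable \<mu> f"
    by (rule integrable_bounded_borel[OF p\<mu> s\<mu> g_meas g_bound] integrable_bounded_borel[OF p\<mu> s\<mu> f_meas f_bound])+
  have "integral\<^sup>L \<mu> f \<le> integral\<^sup>L \<mu> (\<lambda>z. g z + 1 / real n)"
    by (intro integral_mono Bochner_Integration.integrable_add int_f int_g \<mu>.integrable_const f_le_g)
  also have "\<dots> = integral\<^sup>L \<mu> g + 1 / real n"
    using int_g by (simp add: \<mu>.prob_space)
  finally have "integral\<^sup>L \<mu> f \<le> integral\<^sup>L \<mu> g + 1 / real n" .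
  moreover have "integral\<^sup>L \<nu> g \<le> integral\<^sup>L \<nu> f"
    by (intro integral_mono g_le_f integrable_bounded_borel[OF p\<nu> s\<nu> f_meas f_bound]
        integrable_bounded_borel[OF p\<nu> s\<nu> g_meas g_bound])
  ultimately show ?thesis
    using g_diff by linarith
qed

lemma integral_diff_le_var_norm:
  assumes "prob_space \<mu>" "sets \<mu> = sets borel" "prob_space \<nu>" "sets \<nu> = sets borel"
    and "f \<in> unit_borel_functions"
  shows "integral\<^sup>L \<mu> f - integral\<^sup>L \<nu> f \<le> var_norm \<mu> \<nu>"
proof (rule field_le_epsilon)
  fix e :: real assume "0 < e"
  then obtain n :: nat where n: "0 < n" "1 / real n < e"
    using ex_inverse_of_nat_less[OF \<open>0 < e\<close>] by (auto simp: inverse_eq_divide)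
  then show "integral\<^sup>L \<mu> f - integral\<^sup>L \<nu> f \<le> var_norm \<mu> \<nu> + e"
    using integral_diff_le_var_norm_add_inverse[OF assms n(1)] by linarith
qed

lemma var_norm_eq_SUP_integral_diff:
  assumes p\<mu>: "prob_space \<mu>" and s\<mu>: "sets \<mu> = sets borel"
    and p\<nu>: "prob_space \<nu>" and s\<nu>: "sets \<nu> = sets borel"
  shows "var_norm \<mu> \<nu> = (SUP f \<in> unit_borel_functions. integral\<^sup>L \<mu> f - integral\<^sup>L \<nu> f)"
proof (rule antisym)
  have bdd: "bdd_above ((\<lambda>f. integral\<^sup>L \<mu> f - integral\<^sup>L \<nu> f) ` unit_borel_functions)"
    using integral_diff_le_var_norm[OF assms] by (intro bdd_aboveI) auto
  have measure_diff_le: "measure \<mu> A - measure \<nu> A \<le> (SUP f \<in> unit_borel_functions. integral\<^sup>L \<mu> f - integral\<^sup>L \<nu> f)"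
    if "A \<in> sets borel" for A
    using cSUP_upper[OF _ bdd, of "indicator A"] that
    by (simp add: unit_borel_functions_def sets_eq_imp_space_eq[OF s\<mu>] sets_eq_imp_space_eq[OF s\<nu>])
  show "var_norm \<mu> \<nu> \<le> (SUP f \<in> unit_borel_functions. integral\<^sup>L \<mu> f - integral\<^sup>L \<nu> f)"
    unfolding var_norm_def
  proof (rule cSUP_least)
    fix A :: "'a set" assume A: "A \<in> sets borel"
    have "measure \<mu> (UNIV - A) = 1 - measure \<mu> A" "measure \<nu> (UNIV - A) = 1 - measure \<nu> A"
      using prob_space.prob_compl[OF p\<mu>, of A] prob_space.prob_compl[OF p\<nu>, of A] A s\<mu> s\<nu>
        sets_eq_imp_space_eq[OF s\<mu>] sets_eq_imp_space_eq[OF s\<nu>] by simp_all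
    then show "\<bar>measure \<mu> A - measure \<nu> A\<bar> \<le> (SUP f \<in> unit_borel_functions. integral\<^sup>L \<mu> f - integral\<^sup>L \<nu> f)"
      using measure_diff_le[OF A] measure_diff_le[of "UNIV - A"] A by auto
  qed auto
  show "(SUP f \<in> unit_borel_functions. integral\<^sup>L \<mu> f - integral\<^sup>L \<nu> f) \<le> var_norm \<mu> \<nu>"
    using integral_diff_le_var_norm[OF assms]
    by (intro cSUP_least) (auto simp: unit_borel_functions_def intro!: exI[of _ "\<lambda>_. 0"])
qed

subsection \<open>Continuity of the variation distance under (H2)\<close>

lemma markov_transition_prob:
  assumes "markov_transition P" "t \<ge> 0"
  shows "prob_space (P t x)" "sets (P t x) = sets borel"
  using assms unfolding markov_transition_def by auto

lemma H2_var_norm_tendsto_0: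
  fixes P :: "real \<Rightarrow> 'a::euclidean_space \<Rightarrow> 'a measure"
  assumes mt: "markov_transition P" and "H2 P" and t: "t > 0"
  shows "((\<lambda>y. var_norm (P t x) (P t y)) \<longlongrightarrow> 0) (at x)"
proof -
  define G where "G = {f::'a \<Rightarrow> real. f \<in> borel_measurable borel \<and> (\<forall>z. \<bar>f z\<bar> \<le> 1)}"
  define D where "D y = (SUP f \<in> G. Pf P t f x - Pf P t f y)" for y
  have D: "(D \<longlongrightarrow> 0) (at x)"
    using \<open>H2 P\<close> t unfolding H2_def D_def G_def by auto
  have pr: "prob_space (P t z)" "sets (P t z) = sets borel" for z
    using markov_transition_prob[OF mt] t by auto
  have "var_norm (P t x) (P t y) \<le> D y" for y
  proof -
    have "Pf P t f x - Pf P t f y \<le> 2" if "f \<in> G" for f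
    proof -
      have "f \<in> borel_measurable borel" "\<And>z. \<bar>f z\<bar> \<le> 1"
        using that by (auto simp: G_def)
      from abs_integral_le_1[OF pr this, of x] abs_integral_le_1[OF pr this, of y] show ?thesis
        by (simp add: Pf_def abs_le_iff)
    qed
    then have bdd: "bdd_above ((\<lambda>f. Pf P t f x - Pf P t f y) ` G)"
      by (intro bdd_aboveI[where M=2]) auto
    have "unit_borel_functions \<subseteq> G"
      by (auto simp: unit_borel_functions_def G_def)
    then show ?thesis
      using bdd unfolding var_norm_eq_SUP_integral_diff[OF pr pr] D_def Pf_def
      by (intro cSUP_subset_mono) (auto simp: unit_borel_functions_def intro!: exI[of _ "\<lambda>_. 0"])
  qed
  then show ?thesis
    by (intro tendsto_sandwich[OF _ _ tendsto_const D]) (auto intro!: always_eventually var_norm_nonneg pr)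
qed

lemma continuous_on_var_norm_pairs:
  fixes Q :: "'a::metric_space \<Rightarrow> 'b::euclidean_space measure"
  assumes prob: "\<And>z. prob_space (Q z)"
    and tendsto: "\<And>x. ((\<lambda>y. var_norm (Q x) (Q y)) \<longlongrightarrow> 0) (at x)"
  shows "continuous_on S (\<lambda>p. var_norm (Q (fst p)) (Q (snd p)))"
proof (intro continuous_at_imp_continuous_on ballI)
  fix q :: "'a \<times> 'a"
  obtain a b where q: "q = (a, b)"
    by (rule prod.exhaust)
  let ?g = "\<lambda>p. var_norm (Q (fst p)) (Q (snd p))"
  let ?h = "\<lambda>p. var_norm (Q a) (Q (fst p)) + var_norm (Q b) (Q (snd p))"
  have isCont: "isCont (\<lambda>y. var_norm (Q x) (Q y)) x" for x
    using tendsto[of x] by (simp add: isCont_def)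
  have "(fst \<longlongrightarrow> a) (at (a, b))" "(snd \<longlongrightarrow> b) (at (a, b))"
    using tendsto_fst[OF tendsto_ident_at[of "(a, b)" UNIV]] tendsto_snd[OF tendsto_ident_at[of "(a, b)" UNIV]]
    by simp_all
  from isCont_tendsto_compose[OF isCont[of a] this(1)] isCont_tendsto_compose[OF isCont[of b] this(2)]
  have h: "(?h \<longlongrightarrow> 0) (at (a, b))"
    using tendsto_add by fastforce
  have bound: "norm (?g p - ?g (a, b)) \<le> ?h p" for p
  proof -
    have "?g p \<le> ?g (a, b) + ?h p"
      using var_norm_triangle[of "Q (fst p)" "Q a" "Q (snd p)", OF prob prob prob]
        var_norm_triangle[of "Q a" "Q b" "Q (snd p)", OF prob prob prob]
        var_norm_commute[of "Q (fst p)" "Q a"]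
      by simp
    moreover have "?g (a, b) \<le> ?g p + ?h p"
      using var_norm_triangle[of "Q a" "Q (fst p)" "Q b", OF prob prob prob]
        var_norm_triangle[of "Q (fst p)" "Q (snd p)" "Q b", OF prob prob prob]
        var_norm_commute[of "Q (snd p)" "Q b"]
      by simp
    ultimately show ?thesis
      by (auto simp: abs_le_iff)
  qed
  have "((\<lambda>p. ?g p - ?g (a, b)) \<longlongrightarrow> 0) (at (a, b))"
    by (rule Lim_null_comparison[OF always_eventually[OF allI[OF bound]] h])
  then show "isCont ?g q"
    unfolding q isCont_def by (rule LIM_zero_cancel)
qed

lemma var_norm_small_near_diagonal:
  fixes P :: "real \<Rightarrow> 'a::euclidean_space \<Rightarrow> 'a measure"
  assumes "markov_transition P" "H2 P" "t > 0" "e > 0"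
  shows "\<exists>\<delta>>0. \<forall>a b. dist a b \<le> \<delta> \<longrightarrow> norm a \<le> r \<longrightarrow> norm b \<le> r \<longrightarrow> var_norm (P t a) (P t b) \<le> e"
proof -
  let ?g = "\<lambda>p. var_norm (P t (fst p)) (P t (snd p))"
  let ?K = "cball (0::'a) r \<times> cball 0 r"
  have "prob_space (P t z)" for z
    using markov_transition_prob[OF assms(1)] assms(3) by simp
  then have "continuous_on ?K ?g"
    by (intro continuous_on_var_norm_pairs H2_var_norm_tendsto_0 assms(1-3))
  then have "uniformly_continuous_on ?K ?g"
    by (intro compact_uniformly_continuous compact_Times compact_cball)
  then obtain d where "d > 0" and d: "\<And>p q. p \<in> ?K \<Longrightarrow> q \<in> ?K \<Longrightarrow> dist q p < d \<Longrightarrow> dist (?g q) (?g p) < e"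
    using \<open>e > 0\<close> unfolding uniformly_continuous_on_def by metis
  have "var_norm (P t a) (P t b) \<le> e" if "dist a b \<le> d / 2" "norm a \<le> r" "norm b \<le> r" for a b
    using d[of "(a, a)" "(a, b)"] that \<open>d > 0\<close> by (simp add: dist_Pair_Pair dist_real_def dist_commute)
  then show ?thesis
    using \<open>d > 0\<close> by (intro exI[of _ "d / 2"]) auto
qed

lemma distr_pair_snd:
  assumes "prob_space M" "prob_space N"
  shows "distr (M \<Otimes>\<^sub>M N) N snd = N"
proof (intro measure_eqI)
  interpret M: prob_space M by fact
  interpret N: prob_space N by fact
  fix A assume A: "A \<in> sets (distr (M \<Otimes>\<^sub>M N) N snd)"
  then have "emeasure (distr (M \<Otimes>\<^sub>M N) N snd) A = emeasure (M \<Otimes>\<^sub>M N) (space M \<times> A)"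
    by (auto simp: emeasure_distr space_pair_measure dest: sets.sets_into_space
        intro!: arg_cong2[where f=emeasure])
  also have "\<dots> = emeasure N A"
    using A by (simp add: N.emeasure_pair_measure_Times M.emeasure_space_1)
  finally show "emeasure (distr (M \<Otimes>\<^sub>M N) N snd) A = emeasure N A" .
qed simp

lemma product_in_couplings:
  assumes "prob_space \<mu>" "sets \<mu> = sets borel" "prob_space \<nu>" "sets \<nu> = sets borel"
  shows "\<mu> \<Otimes>\<^sub>M \<nu> \<in> couplings \<mu> \<nu>"
proof -
  interpret N: prob_space \<nu> by fact
  note prob = assms(1,3) and sets_eq = assms(2,4)
  have "distr (\<mu> \<Otimes>\<^sub>M \<nu>) borel fst = distr (\<mu> \<Otimes>\<^sub>M \<nu>) \<mu> fst"
    "distr (\<mu> \<Otimes>\<^sub>M \<nu>) borel snd = distr (\<mu> \<Otimes>\<^sub>M \<nu>) \<nu> snd"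
    by (rule distr_cong; simp add: assms)+
  then show ?thesis
    using N.distr_pair_fst distr_pair_snd[OF prob] prob_space_pair[OF prob]
      sets_pair_measure_cong[OF sets_eq]
    by (simp add: couplings_def)
qed

lemma couplingsD:
  fixes \<mu> \<nu> :: "'a::euclidean_space measure"
  assumes "\<pi> \<in> couplings \<mu> \<nu>"
  shows "prob_space \<pi>" "sets \<pi> = sets borel" "distr \<pi> borel fst = \<mu>" "distr \<pi> borel snd = \<nu>"
proof -
  have "sets \<pi> = sets (borel \<Otimes>\<^sub>M borel)"
    using assms by (simp add: couplings_def)
  then show "sets \<pi> = sets borel"
    by (simp only: borel_prod)
qed (use assms in \<open>simp_all add: couplings_def\<close>)

lemma borel_measurable_fst: "fst \<in> borel_measurable (borel :: ('a::topological_space \<times> 'b::topological_space) measure)"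
  by (intro borel_measurable_continuous_onI continuous_intros)

lemma borel_measurable_snd: "snd \<in> borel_measurable (borel :: ('a::topological_space \<times> 'b::topological_space) measure)"
  by (intro borel_measurable_continuous_onI continuous_intros)

lemma coupling_marginals:
  fixes \<mu> \<nu> :: "'a::euclidean_space measure"
  assumes \<pi>: "\<pi> \<in> couplings \<mu> \<nu>"
  shows "prob_space \<mu>" "sets \<mu> = sets borel" "prob_space \<nu>" "sets \<nu> = sets borel"
proof -
  interpret \<pi>: prob_space \<pi> by (rule couplingsD(1)[OF \<pi>])
  have "fst \<in> \<pi> \<rightarrow>\<^sub>M borel" "snd \<in> \<pi> \<rightarrow>\<^sub>M borel"
    using borel_measurable_fst borel_measurable_snd measurable_cong_sets[OF couplingsD(2)[OF \<pi>] refl]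
    by auto
  then show "prob_space \<mu>" "prob_space \<nu>"
    using \<pi>.prob_space_distr couplingsD(3,4)[OF \<pi>] by metis+
  show "sets \<mu> = sets borel" "sets \<nu> = sets borel"
    using couplingsD(3,4)[OF \<pi>] by auto
qed

lemma coupling_integral_diff:
  fixes h :: "'a::euclidean_space \<Rightarrow> real" and B :: real
  assumes \<pi>: "\<pi> \<in> couplings \<mu> \<nu>" and [measurable]: "h \<in> borel_measurable borel" and "\<And>z. \<bar>h z\<bar> \<le> B"
  shows "integral\<^sup>L \<mu> h - integral\<^sup>L \<nu> h = integral\<^sup>L \<pi> (\<lambda>p. h (fst p) - h (snd p))"
proof -
  note prob = couplingsD(1)[OF \<pi>] and sets_eq = couplingsD(2)[OF \<pi>]
  note fst = borel_measurable_fst and snd = borel_measurable_snd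
  then have [measurable]: "fst \<in> \<pi> \<rightarrow>\<^sub>M borel" "snd \<in> \<pi> \<rightarrow>\<^sub>M borel"
    by (simp_all add: measurable_cong_sets[OF sets_eq refl])
  have "integrable \<pi> (\<lambda>p. h (fst p))" "integrable \<pi> (\<lambda>p. h (snd p))"
    using assms(3) by (auto intro!: integrable_bounded_borel[OF prob sets_eq] measurable_compose[OF fst] measurable_compose[OF snd])
  then show ?thesis
    unfolding couplingsD(3,4)[OF \<pi>, symmetric] by (simp add: integral_distr)
qed

subsection \<open>Contraction through a coupling\<close>

lemma integral_bind_prob_kernel:
  fixes f :: "'a::euclidean_space \<Rightarrow> real"
  assumes K: "K \<in> borel \<rightarrow>\<^sub>M subprob_algebra borel" "\<And>z. prob_space (K z)"
    and M: "prob_space M" "sets M = sets borel"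
    and [measurable]: "f \<in> borel_measurable borel" and "\<And>z. \<bar>f z\<bar> \<le> B"
  shows "integral\<^sup>L (M \<bind> K) f = (\<integral>z. integral\<^sup>L (K z) f \<partial>M)"
  using K M prob_space.finite_measure[OF M(1)] measurable_cong_sets[OF M(2) refl] assms(6)
  by (intro integral_bind[where K=borel and B=B and B'=1]) (auto simp: prob_space.emeasure_space_1)

lemma kernel_integral_in_unit_borel_functions:
  assumes K: "K \<in> borel \<rightarrow>\<^sub>M subprob_algebra borel" "\<And>z. prob_space (K z)" "\<And>z. sets (K z) = sets borel"
    and f: "f \<in> unit_borel_functions"
  shows "(\<lambda>z. integral\<^sup>L (K z) f) \<in> unit_borel_functions"
proof -
  have [measurable]: "f \<in> borel_measurable borel" and f01: "\<And>z. 0 \<le> f z \<and> f z \<le> 1"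
    using f by (auto simp: unit_borel_functions_def)
  have "(\<lambda>z. integral\<^sup>L (K z) f) \<in> borel_measurable borel"
    by (rule measurable_compose[OF K(1) integral_measurable_subprob_algebra]) simp
  moreover have "0 \<le> integral\<^sup>L (K z) f" "integral\<^sup>L (K z) f \<le> 1" for z
    using f01 abs_integral_le_1[OF K(2,3), of f z] by (auto simp: abs_le_iff)
  ultimately show ?thesis
    by (simp add: unit_borel_functions_def)
qed

text \<open>
  Pairs in \<open>S\<close> contribute at most \<open>c\<close> to the difference, the remaining ones at most \<open>1\<close>.
\<close>
lemma coupling_bind_integral_diff_le:
  fixes K :: "'a::euclidean_space \<Rightarrow> 'a measure"
  assumes K: "K \<in> borel \<rightarrow>\<^sub>M subprob_algebra borel" "\<And>z. prob_space (K z)" "\<And>z. sets (K z) = sets borel"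
    and \<pi>: "\<pi> \<in> couplings \<mu> \<nu>" and S: "S \<in> sets borel"
    and close: "\<And>p. p \<in> S \<Longrightarrow> var_norm (K (fst p)) (K (snd p)) \<le> c"
    and f: "f \<in> unit_borel_functions"
  shows "integral\<^sup>L (\<mu> \<bind> K) f - integral\<^sup>L (\<nu> \<bind> K) f \<le> 1 - (1 - c) * measure \<pi> S"
proof -
  note prob = couplingsD(1)[OF \<pi>] and sets_eq = couplingsD(2)[OF \<pi>]
  interpret \<pi>: prob_space \<pi> by (fact prob)
  note marginals = coupling_marginals[OF \<pi>]
  define h where "h z = integral\<^sup>L (K z) f" for z
  have "h \<in> unit_borel_functions"
    unfolding h_def by (rule kernel_integral_in_unit_borel_functions[OF K f])
  then have [measurable]: "h \<in> borel_measurable borel" and h01: "\<And>z. 0 \<le> h z \<and> h z \<le> 1"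
    by (auto simp: unit_borel_functions_def)
  have f_bound: "\<bar>f z\<bar> \<le> 1" for z
    using f by (auto simp: unit_borel_functions_def)
  have "integral\<^sup>L (M \<bind> K) f = integral\<^sup>L M h" if "prob_space M" "sets M = sets borel" for M
    unfolding h_def using f
    by (intro integral_bind_prob_kernel[OF K(1,2) that _ f_bound]) (simp add: unit_borel_functions_def)
  then have "integral\<^sup>L (\<mu> \<bind> K) f - integral\<^sup>L (\<nu> \<bind> K) f = integral\<^sup>L \<mu> h - integral\<^sup>L \<nu> h"
    using marginals by simp
  also have "\<dots> = integral\<^sup>L \<pi> (\<lambda>p. h (fst p) - h (snd p))"
    using h01 by (intro coupling_integral_diff[OF \<pi>, of _ 1]) (auto simp: abs_le_iff)
  also have "\<dots> \<le> integral\<^sup>L \<pi> (\<lambda>p. 1 - (1 - c) * indicator S p)"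
  proof (rule integral_mono)
    have "(\<lambda>p. h (fst p)) \<in> borel_measurable borel" "(\<lambda>p. h (snd p)) \<in> borel_measurable borel"
      by (simp_all add: measurable_compose[OF borel_measurable_fst] measurable_compose[OF borel_measurable_snd])
    moreover have "\<bar>h (fst p) - h (snd p)\<bar> \<le> 1" for p
      using h01[of "fst p"] h01[of "snd p"] by (auto simp: abs_le_iff)
    ultimately show "integrable \<pi> (\<lambda>p. h (fst p) - h (snd p))"
      by (intro integrable_bounded_borel[OF prob sets_eq] borel_measurable_diff)
    show "integrable \<pi> (\<lambda>p. 1 - (1 - c) * indicator S p)"
      using S sets_eq by (auto simp: less_top[symmetric])
    fix p :: "'a \<times> 'a"
    have "h (fst p) - h (snd p) \<le> var_norm (K (fst p)) (K (snd p))"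
      unfolding h_def by (intro integral_diff_le_var_norm K f)
    then show "h (fst p) - h (snd p) \<le> 1 - (1 - c) * indicator S p"
      using close[of p] h01[of "fst p"] h01[of "snd p"] by (cases "p \<in> S") auto
  qed
  also have "\<dots> = 1 - (1 - c) * measure \<pi> S"
    using S sets_eq by (simp add: integral_indicator_borel \<pi>.prob_space less_top[symmetric])
  finally show ?thesis .
qed

lemma var_norm_lt_1_if_coupling:
  fixes P :: "real \<Rightarrow> 'a::euclidean_space \<Rightarrow> 'a measure"
  assumes mt: "markov_transition P" and "s \<ge> 0" "t \<ge> 0"
    and \<pi>: "\<pi> \<in> couplings (P s x) (P s y)" and S: "S \<in> sets borel" "measure \<pi> S > 0"
    and close: "\<And>p. p \<in> S \<Longrightarrow> var_norm (P t (fst p)) (P t (snd p)) \<le> c" and "c < 1"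
  shows "var_norm (P (s + t) x) (P (s + t) y) < 1"
proof -
  have K: "P t \<in> borel \<rightarrow>\<^sub>M subprob_algebra borel" and bind: "\<And>z. P (s + t) z = P s z \<bind> P t"
    using mt \<open>s \<ge> 0\<close> \<open>t \<ge> 0\<close> by (auto simp: markov_transition_def)
  have "s + t \<ge> 0"
    using \<open>s \<ge> 0\<close> \<open>t \<ge> 0\<close> by simp
  note pr = markov_transition_prob[OF mt this] and K_pr = markov_transition_prob[OF mt \<open>t \<ge> 0\<close>]
  have "var_norm (P (s + t) x) (P (s + t) y)
      = (SUP f \<in> unit_borel_functions. integral\<^sup>L (P (s + t) x) f - integral\<^sup>L (P (s + t) y) f)"
    by (rule var_norm_eq_SUP_integral_diff[OF pr pr])
  also have "\<dots> \<le> 1 - (1 - c) * measure \<pi> S"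
    unfolding bind
  proof (rule cSUP_least)
    show "unit_borel_functions \<noteq> {}"
      by (auto simp: unit_borel_functions_def intro!: exI[of _ "\<lambda>_. 0"])
  qed (rule coupling_bind_integral_diff_le[OF K K_pr \<pi> S(1) close])
  also have "\<dots> < 1"
    using \<open>c < 1\<close> S(2) by simp
  finally show ?thesis .
qed

lemma eventually_var_norm_lt_1:
  fixes P :: "real \<Rightarrow> 'a::euclidean_space \<Rightarrow> 'a measure"
  assumes mt: "markov_transition P" and "H1 P" "H2 P" "R > 0"
  shows "\<exists>T. \<forall>t\<ge>T. \<forall>x y. norm x \<le> R \<longrightarrow> norm y \<le> R \<longrightarrow> var_norm (P (t + 1) x) (P (t + 1) y) < 1"
proof -
  obtain R0 where H1_R0: "\<forall>\<delta>>0. \<exists>T. \<forall>t\<ge>T. \<forall>x y. norm x \<le> R \<longrightarrow> norm y \<le> R \<longrightarrow>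
     (SUP \<pi> \<in> couplings (P t x) (P t y).
        measure \<pi> {(x', y'). dist x' y' \<le> \<delta> \<and> norm x' \<le> R0 \<and> norm y' \<le> R0}) > 0"
    using \<open>H1 P\<close> \<open>R > 0\<close> unfolding H1_def by blast
  obtain \<delta> where "\<delta> > 0" and \<delta>: "\<And>a b. dist a b \<le> \<delta> \<Longrightarrow> norm a \<le> R0 \<Longrightarrow> norm b \<le> R0 \<Longrightarrow>
      var_norm (P 1 a) (P 1 b) \<le> 1/2"
    using var_norm_small_near_diagonal[OF mt \<open>H2 P\<close>, of 1 "1/2" R0] by auto
  define S where "S = {(x'::'a, y'). dist x' y' \<le> \<delta> \<and> norm x' \<le> R0 \<and> norm y' \<le> R0}"
  obtain T where T: "\<And>t x y. t \<ge> T \<Longrightarrow> norm x \<le> R \<Longrightarrow> norm y \<le> R \<Longrightarrow>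
      (SUP \<pi> \<in> couplings (P t x) (P t y). measure \<pi> S) > 0"
    using H1_R0 \<open>\<delta> > 0\<close> unfolding S_def by blast
  have "closed S"
    unfolding S_def case_prod_unfold
    by (intro closed_Collect_conj closed_Collect_le continuous_intros)
  then have S_borel: "S \<in> sets borel" by simp
  have "var_norm (P (t + 1) x) (P (t + 1) y) < 1"
    if t: "t \<ge> max T 0" and xy: "norm x \<le> R" "norm y \<le> R" for t x y
  proof -
    have pr: "prob_space (P t z)" "sets (P t z) = sets borel" for z
      using markov_transition_prob[OF mt] t by auto
    have bdd: "bdd_above ((\<lambda>\<pi>. measure \<pi> S) ` couplings (P t x) (P t y))"
      by (intro bdd_aboveI[where M=1]) (auto simp: couplings_def intro: prob_space.prob_le_1)
    have ne: "couplings (P t x) (P t y) \<noteq> {}"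
      using product_in_couplings[OF pr pr] by blast
    have "T \<le> t"
      using t by simp
    then obtain \<pi> where \<pi>: "\<pi> \<in> couplings (P t x) (P t y)" and pos: "measure \<pi> S > 0"
      using T[of t x y] xy less_cSUP_iff[OF ne bdd] by blast
    have close: "var_norm (P 1 (fst p)) (P 1 (snd p)) \<le> 1/2" if "p \<in> S" for p
    proof -
      obtain a b where p: "p = (a, b)"
        by fastforce
      with that have "dist a b \<le> \<delta>" "norm a \<le> R0" "norm b \<le> R0"
        by (simp_all add: S_def)
      then show ?thesis
        unfolding p fst_conv snd_conv by (rule \<delta>)
    qed
    show ?thesis
      using t by (intro var_norm_lt_1_if_coupling[OF mt _ _ \<pi> S_borel pos close]) auto
  qed
  then have "\<forall>t\<ge>max T 0. \<forall>x y. norm x \<le> R \<longrightarrow> norm y \<le> R \<longrightarrow> var_norm (P (t + 1) x) (P (t + 1) y) < 1"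
    by blast
  then show ?thesis
    by blast
qed

lemma SUP_lt_if_continuous_on_compact:
  fixes g :: "'a::topological_space \<Rightarrow> real"
  assumes "compact K" "K \<noteq> {}" "continuous_on K g" "\<And>p. p \<in> K \<Longrightarrow> g p < c"
  shows "(SUP p \<in> K. g p) < c"
proof -
  obtain p0 where "p0 \<in> K" "\<And>p. p \<in> K \<Longrightarrow> g p \<le> g p0"
    using continuous_attains_sup[OF assms(1-3)] by blast
  then have "(SUP p \<in> K. g p) \<le> g p0"
    using assms(2) by (intro cSUP_least) auto
  also have "g p0 < c"
    using assms(4) \<open>p0 \<in> K\<close> .
  finally show ?thesis .
qed

theorem lemma3p3:
  fixes P :: "real \<Rightarrow> real^'n \<Rightarrow> (real^'n) measure" and R :: real
  assumes "markov_transition P" and "H1 P" and "H2 P" and "R > 0"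
  shows "\<exists>T0 > 1.
     (\<forall>t > T0. \<forall>x y. norm x \<le> R \<longrightarrow> norm y \<le> R \<longrightarrow>
        var_norm (P t x) (P t y) =
          (SUP f \<in> {f. f \<in> borel_measurable borel \<and> (\<forall>z. 0 \<le> f z \<and> f z \<le> 1)}.
             Pf P t f x - Pf P t f y)
        \<and> var_norm (P t x) (P t y) < 1) \<and>
     (\<forall>t > T0. (SUP xy \<in> cball 0 R \<times> cball 0 R. var_norm (P t (fst xy)) (P t (snd xy))) < 1)"
proof -
  obtain T where T: "\<And>t x y. t \<ge> T \<Longrightarrow> norm x \<le> R \<Longrightarrow> norm y \<le> R \<Longrightarrow>
      var_norm (P (t + 1) x) (P (t + 1) y) < 1"
    using eventually_var_norm_lt_1[OF assms] by blast
  define T0 where "T0 = max T 1 + 1"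
  have lt_1: "var_norm (P t x) (P t y) < 1" if "t > T0" "norm x \<le> R" "norm y \<le> R" for t x y
    using T[of "t - 1" x y] that by (simp add: T0_def)
  have pr: "prob_space (P t z)" "sets (P t z) = sets borel" if "t > T0" for t z
    using markov_transition_prob[OF assms(1)] that by (auto simp: T0_def)
  show ?thesis
  proof (intro exI[of _ T0] conjI allI impI)
    show "T0 > 1"
      by (simp add: T0_def)
  next
    fix t :: real and x y :: "real^'n" assume t: "t > T0" and "norm x \<le> R" "norm y \<le> R"
    show "var_norm (P t x) (P t y) =
        (SUP f \<in> {f. f \<in> borel_measurable borel \<and> (\<forall>z. 0 \<le> f z \<and> f z \<le> 1)}. Pf P t f x - Pf P t f y)"
      unfolding var_norm_eq_SUP_integral_diff[OF pr[OF t] pr[OF t]] by (simp add: Pf_def unit_borel_functions_def)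
    show "var_norm (P t x) (P t y) < 1"
      by (rule lt_1) fact+
  next
    fix t :: real assume t: "t > T0"
    show "(SUP xy \<in> cball 0 R \<times> cball 0 R. var_norm (P t (fst xy)) (P t (snd xy))) < 1"
    proof (rule SUP_lt_if_continuous_on_compact)
      show "continuous_on (cball 0 R \<times> cball 0 R) (\<lambda>p. var_norm (P t (fst p)) (P t (snd p)))"
        using t by (intro continuous_on_var_norm_pairs pr H2_var_norm_tendsto_0[OF assms(1,3)]) (auto simp: T0_def)
    qed (use t lt_1 \<open>R > 0\<close> in \<open>auto intro: compact_Times\<close>)
  qed
qed

end
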